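(* Let $n\ge 2$ and $r\ge1$ an integer. (i) There exist $A,B\in\mathrm{SGL}_n(\mathbb{F}_2)$ and linearly independent $\mathbf{x}_1,\ldots,\mathbf{x}_r\in\mathbb{F}_2^n$ with $B-A=\sum_{i=1}^r\mathbf{x}_i\mathbf{x}_i^{\top}$ and $\mathbf{x}_i^{\top}A^{-1}\mathbf{x}_j=1$ for all $i,j$ if and only if $r$ is even and $r\le\lfloor\frac{n+1}{2}\rfloor$. (ii) There exist $A,B\in\mathrm{SGL}_n(\mathbb{F}_2)$ and linearly independent $\mathbf{x}_1,\ldots,\mathbf{x}_r$ with $B-A=\sum_{i=1}^r\mathbf{x}_i\mathbf{x}_i^{\top}$, $\mathbf{x}_i^{\top}A^{-1}\mathbf{x}_i=1$ for all $i$, and $\mathbf{x}_i^{\top}A^{-1}\mathbf{x}_j=0$ for some $i,j$, if and only if $r\in\{1,\ldots,n\}\setminus\{2\}$ is even. (iii) There exist $A,B\in\mathrm{SGL}_n(\mathbb{F}_2)$ and linearly independent $\mathbf{x}_1,\ldots,\mathbf{x}_r$ with $B-A=\sum_{i=1}^r\mathbf{x}_i\mathbf{x}_i^{\top}$ and $[\mathbf{x}_i^{\top}A^{-1}\mathbf{x}_j]_{i,j=1}^r$ of rank one and trace zero if and only if $r\in\{2,3,\ldots,\lfloor\frac{n+1}{2}\rfloor\}$. (iv) For each $r\in\{1,\ldots,n\}$ there exist $A,B\in\mathrm{SGL}_n(\mathbb{F}_2)$ and linearly independent $\mathbf{x}_1,\ldots,\mathbf{x}_r$ with $B-A=\sum_{i=1}^r\mathbf{x}_i\mathbf{x}_i^{\top}$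 such that it is neither the case that $\mathbf{x}_i^{\top}A^{-1}\mathbf{x}_i=1$ for all $i$, nor the case that $[\mathbf{x}_i^{\top}A^{-1}\mathbf{x}_j]_{i,j=1}^r$ has rank one and trace zero.
   Context: $\mathbb{F}_2$ is the binary field; $\mathrm{SGL}_n(\mathbb{F}_2)$ denotes the set of invertible symmetric $n\times n$ matrices over $\mathbb{F}_2$. *)

theory Defs
  imports "HOL-Library.Z2" "Jordan_Normal_Form.DL_Rank"
begin

text \<open>F_2 is the type bit (HOL-Library.Z2), a field. Matrices/vectors are JNF
  matrices/vectors with explicit dimensions.\<close>

definition SGL :: "nat \<Rightarrow> bit mat set" where
  "SGL n = {A \<in> carrier_mat n n. transpose_mat A = A \<and> invertible_mat A}"

definition minv :: "'a::field mat \<Rightarrow> 'a mat" where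
  "minv A = (THE B. B \<in> carrier_mat (dim_row A) (dim_row A) \<and> inverts_mat A B \<and> inverts_mat B A)"

definition sum_outer :: "nat \<Rightarrow> nat \<Rightarrow> (nat \<Rightarrow> 'a::comm_ring_1 vec) \<Rightarrow> 'a mat" where
  "sum_outer n r x = mat n n (\<lambda>(k, l). \<Sum>i<r. (x i $ k) * (x i $ l))"

definition lin_indep_family :: "nat \<Rightarrow> nat \<Rightarrow> (nat \<Rightarrow> bit vec) \<Rightarrow> bool" where
  "lin_indep_family n r x \<longleftrightarrow> (\<forall>i<r. x i \<in> carrier_vec n) \<and> inj_on x {..<r} \<and>
     module.lin_indpt class_ring (module_vec TYPE(bit) n) (x ` {..<r})"

definition gram :: "nat \<Rightarrow> bit mat \<Rightarrow> (nat \<Rightarrow> bit vec) \<Rightarrow> bit mat" where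
  "gram r A x = mat r r (\<lambda>(i, j). x i \<bullet> (minv A *\<^sub>v x j))"

definition mtrace :: "'a::comm_monoid_add mat \<Rightarrow> 'a" where
  "mtrace M = (\<Sum>i<dim_row M. M $$ (i, i))"

definition setting :: "nat \<Rightarrow> nat \<Rightarrow> bit mat \<Rightarrow> bit mat \<Rightarrow> (nat \<Rightarrow> bit vec) \<Rightarrow> bool" where
  "setting n r A B x \<longleftrightarrow> A \<in> SGL n \<and> B \<in> SGL n \<and> lin_indep_family n r x \<and>
     B - A = sum_outer n r x"

end

(*
  Write G = [x_i^T A^-1 x_j]. Since B = A + X X^T is invertible, so is 1 + G: if c + G c = 0, then
  w = A^-1 X c satisfies B w = 0, hence w = 0 and c = 0. Over F_2 a symmetric matrix with zero
  diagonal is alternating, hence singular in odd dimension; applied to 1 + G this shows that a unit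
  diagonal forces r to be even, while G = 1 is impossible outright (this excludes r = 2 in (ii)).
  A symmetric matrix of rank one over F_2 is u u^T with u its diagonal, and if G = u u^T with
  u_p = 1 then the r independent vectors A^-1 x_i are orthogonal to the r - 1 independent vectors
  x_k + u_k x_p (k ~= p), so 2 r - 1 <= n.
  Conversely, for A = 1 and x_i the indicator vector of a set S_i, the entry G_ij is the parity of
  |S_i Int S_j|, and explicit set systems in echelon form realise the required Gram matrices.
*)

theory Submission
  imports Defs
begin

declare add_bit_eq_xor[simp del] mult_bit_eq_and[simp del]

lemma bit_add_self [simp]: "(a::bit) + a = 0"
  by (cases a) auto

lemma bit_mult_self [simp]: "(a::bit) * a = a"
  by (cases a) auto

lemma bit_add_eq_0_iff: "(a::bit) + b = 0 \<longleftrightarrow> a = b"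
  by (cases a; cases b) auto

lemma of_nat_bit: "(of_nat k :: bit) = of_bool (odd k)"
  by (induction k) auto

section \<open>Linear independence in coordinates\<close>

definition lin_indep_coords :: "nat \<Rightarrow> 'i set \<Rightarrow> ('i \<Rightarrow> nat \<Rightarrow> 'a::field) \<Rightarrow> bool" where
  "lin_indep_coords d I f \<longleftrightarrow> (\<forall>c. (\<forall>j<d. (\<Sum>i\<in>I. c i * f i j) = 0) \<longrightarrow> (\<forall>i\<in>I. c i = 0))"

lemma lin_indep_coordsI:
  "(\<And>c. \<forall>j<d. (\<Sum>i\<in>I. c i * f i j) = 0 \<Longrightarrow> \<forall>i\<in>I. c i = 0) \<Longrightarrow> lin_indep_coords d I f"
  unfolding lin_indep_coords_def by blast

lemma lin_indep_coordsD:
  "lin_indep_coords d I f \<Longrightarrow> \<forall>j<d. (\<Sum>i\<in>I. c i * f i j) = 0 \<Longrightarrow> i \<in> I \<Longrightarrow> c i = 0"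
  unfolding lin_indep_coords_def by blast

lemma lin_indep_coords_zero_dim: "lin_indep_coords 0 I f \<Longrightarrow> I = {}"
  using lin_indep_coordsD[of 0 I f "\<lambda>_. 1"] by auto

lemma lin_indep_coords_shear:
  assumes indep: "lin_indep_coords d I f" and "finite I" and p: "p \<in> I"
  shows "lin_indep_coords d (I - {p}) (\<lambda>i j. f i j + u i * f p j)"
proof (rule lin_indep_coordsI)
  fix c assume h: "\<forall>j<d. (\<Sum>i\<in>I - {p}. c i * (f i j + u i * f p j)) = 0"
  define c' where "c' = c(p := \<Sum>i\<in>I - {p}. c i * u i)"
  have "(\<Sum>i\<in>I. c' i * f i j) = 0" if "j < d" for j
  proof -
    have "(\<Sum>i\<in>I. c' i * f i j) = (\<Sum>i\<in>I - {p}. c i * u i) * f p j + (\<Sum>i\<in>I - {p}. c i * f i j)"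
      using \<open>finite I\<close> p by (simp add: sum.remove c'_def)
    also have "\<dots> = (\<Sum>i\<in>I - {p}. c i * (f i j + u i * f p j))"
      by (simp add: distrib_left sum.distrib sum_distrib_right mult.assoc add.commute)
    finally show ?thesis using h that by simp
  qed
  then have "c' i = 0" if "i \<in> I" for i
    using lin_indep_coordsD[OF indep, of c'] that by blast
  then show "\<forall>i\<in>I - {p}. c i = 0"
    by (metis DiffE c'_def fun_upd_other singletonI)
qed

lemma lin_indep_coords_drop_dependent:
  assumes indep: "lin_indep_coords (Suc d) I f"
    and dependent: "\<forall>i\<in>I. f i d = (\<Sum>j<d. a j * f i j)"
  shows "lin_indep_coords d I f"
proof (rule lin_indep_coordsI)
  fix c assume h: "\<forall>j<d. (\<Sum>i\<in>I. c i * f i j) = 0"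
  have "(\<Sum>i\<in>I. c i * f i d) = (\<Sum>j<d. a j * (\<Sum>i\<in>I. c i * f i j))"
    using dependent by (simp add: sum_distrib_left sum.swap[of _ "{..<d}"] mult_ac)
  also have "\<dots> = 0" using h by simp
  finally have "\<forall>j<Suc d. (\<Sum>i\<in>I. c i * f i j) = 0"
    using h less_Suc_eq by auto
  then show "\<forall>i\<in>I. c i = 0"
    using lin_indep_coordsD[OF indep] by blast
qed

lemma orthogonal_pivot_reduction:
  fixes f g :: "'i \<Rightarrow> nat \<Rightarrow> 'a::field"
  assumes "finite I"
    and indep_f: "lin_indep_coords (Suc d) I f" and indep_g: "lin_indep_coords (Suc d) J g"
    and orth: "\<forall>i\<in>I. \<forall>k\<in>J. (\<Sum>j<Suc d. f i j * g k j) = 0"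
    and pivot: "p \<in> I" "f p d \<noteq> 0"
  defines "f' \<equiv> \<lambda>i j. f i j + (- f i d / f p d) * f p j"
  shows "lin_indep_coords d (I - {p}) f'" "lin_indep_coords d J g"
    "\<forall>i\<in>I - {p}. \<forall>k\<in>J. (\<Sum>j<d. f' i j * g k j) = 0"
proof -
  have f'_last: "f' i d = 0" for i
    using pivot(2) by (simp add: f'_def)
  have "lin_indep_coords (Suc d) (I - {p}) f'"
    unfolding f'_def by (rule lin_indep_coords_shear[OF indep_f \<open>finite I\<close> pivot(1)])
  then show "lin_indep_coords d (I - {p}) f'"
    by (rule lin_indep_coords_drop_dependent[where a = "\<lambda>_. 0"]) (simp add: f'_last)
  show "lin_indep_coords d J g"
  proof (rule lin_indep_coords_drop_dependent[OF indep_g, where a = "\<lambda>j. - f p j / f p d"],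
      intro ballI)
    fix k assume "k \<in> J"
    then have "(\<Sum>j<d. f p j * g k j) + f p d * g k d = 0"
      using orth pivot(1) by simp
    then have "f p d * g k d = - (\<Sum>j<d. f p j * g k j)"
      by (simp add: add.commute eq_neg_iff_add_eq_0)
    then show "g k d = (\<Sum>j<d. - f p j / f p d * g k j)"
      using pivot(2) by (simp add: field_simps sum_divide_distrib[symmetric] sum_negf)
  qed
  show "\<forall>i\<in>I - {p}. \<forall>k\<in>J. (\<Sum>j<d. f' i j * g k j) = 0"
  proof (intro ballI)
    fix i k assume "i \<in> I - {p}" "k \<in> J"
    have "(\<Sum>j<Suc d. f' i j * g k j)
        = (\<Sum>j<Suc d. f i j * g k j) + (- f i d / f p d) * (\<Sum>j<Suc d. f p j * g k j)"
      unfolding f'_def distrib_right sum.distrib sum_distrib_left by (simp add: mult.assoc)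
    also have "\<dots> = 0"
      using orth pivot(1) \<open>i \<in> I - {p}\<close> \<open>k \<in> J\<close> by simp
    finally show "(\<Sum>j<d. f' i j * g k j) = 0"
      using f'_last by simp
  qed
qed

(* A coordinate form of rank-nullity: the g k lie in the kernel of the matrix with rows f i. *)
lemma orthogonal_lin_indep_coords_card_le:
  fixes f g :: "'i \<Rightarrow> nat \<Rightarrow> 'a::field"
  assumes "finite I" "finite J" "lin_indep_coords d I f" "lin_indep_coords d J g"
    and "\<forall>i\<in>I. \<forall>k\<in>J. (\<Sum>j<d. f i j * g k j) = 0"
  shows "card I + card J \<le> d"
  using assms
proof (induction d arbitrary: I J f g)
  case 0
  then show ?case
    using lin_indep_coords_zero_dim by fastforce
next
  case (Suc d)
  have pivot_case: "card I' + card J' \<le> Suc d"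
    if "finite I'" "finite J'" "lin_indep_coords (Suc d) I' f'" "lin_indep_coords (Suc d) J' g'"
      "\<forall>i\<in>I'. \<forall>k\<in>J'. (\<Sum>j<Suc d. f' i j * g' k j) = 0" "p \<in> I'" "f' p d \<noteq> 0"
    for I' J' :: "'i set" and f' g' :: "'i \<Rightarrow> nat \<Rightarrow> 'a" and p
  proof -
    note reduced = orthogonal_pivot_reduction[OF that(1,3-7)]
    have "card (I' - {p}) + card J' \<le> d"
      using Suc.IH[OF _ that(2) reduced] that(1) by simp
    then show ?thesis
      using that(1,6) by (simp add: card_Diff_singleton)
  qed
  consider p where "p \<in> I" "f p d \<noteq> 0" | p where "p \<in> J" "g p d \<noteq> 0"
    | "\<forall>i\<in>I. f i d = 0" "\<forall>k\<in>J. g k d = 0"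
    by blast
  then show ?case
  proof cases
    case 1
    then show ?thesis
      using pivot_case[OF Suc.prems] by blast
  next
    case 2
    have "\<forall>k\<in>J. \<forall>i\<in>I. (\<Sum>j<Suc d. g k j * f i j) = 0"
      using Suc.prems(5) by (simp add: mult.commute)
    then have "card J + card I \<le> Suc d"
      using pivot_case[OF Suc.prems(2,1,4,3)] 2 by blast
    then show ?thesis by simp
  next
    case 3
    have "lin_indep_coords d I f" "lin_indep_coords d J g"
      using lin_indep_coords_drop_dependent[where a = "\<lambda>_. 0"] Suc.prems(3,4) 3 by simp_all
    moreover have "\<forall>i\<in>I. \<forall>k\<in>J. (\<Sum>j<d. f i j * g k j) = 0"
      using Suc.prems(5) 3 by simp
    ultimately have "card I + card J \<le> d"
      by (rule Suc.IH[OF Suc.prems(1,2)])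
    then show ?thesis by simp
  qed
qed

lemma lin_indep_coords_echelon:
  fixes f :: "'i \<Rightarrow> nat \<Rightarrow> 'a::field" and h :: "'i \<Rightarrow> nat"
  assumes "finite I"
    and pivot: "\<And>i. i \<in> I \<Longrightarrow> p i < d \<and> f i (p i) \<noteq> 0"
    and order: "\<And>i j. i \<in> I \<Longrightarrow> j \<in> I \<Longrightarrow> j \<noteq> i \<Longrightarrow> f j (p i) \<noteq> 0 \<Longrightarrow> h j < h i"
  shows "lin_indep_coords d I f"
proof (rule lin_indep_coordsI)
  fix c assume c: "\<forall>k<d. (\<Sum>j\<in>I. c j * f j k) = 0"
  have "c i = 0" if "i \<in> I" for i
    using that
  proof (induction "h i" arbitrary: i rule: less_induct)
    case less
    have "c j * f j (p i) = 0" if "j \<in> I - {i}" for j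
    proof (cases "f j (p i) = 0")
      case False
      then have "h j < h i"
        using order less.prems that by blast
      then show ?thesis
        using less.hyps that by simp
    qed simp
    then have "(\<Sum>j\<in>I - {i}. c j * f j (p i)) = 0"
      by (intro sum.neutral) blast
    then have "c i * f i (p i) = (\<Sum>j\<in>I. c j * f j (p i))"
      using \<open>finite I\<close> less.prems by (simp add: sum.remove)
    also have "\<dots> = 0"
      using c pivot less.prems by simp
    finally show "c i = 0"
      using pivot less.prems by simp
  qed
  then show "\<forall>i\<in>I. c i = 0"
    by blast
qed

section \<open>Matrices over a field\<close>

lemma mult_mat_vec_index_sum:
  "M \<in> carrier_mat n m \<Longrightarrow> v \<in> carrier_vec m \<Longrightarrow> k < n \<Longrightarrow>
    (M *\<^sub>v v) $ k = (\<Sum>l<m. M $$ (k, l) * v $ l)"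
  by (auto simp: scalar_prod_def atLeast0LessThan intro!: sum.cong)

lemma scalar_prod_sum: "v \<in> carrier_vec n \<Longrightarrow> u \<bullet> v = (\<Sum>k<n. u $ k * v $ k)"
  by (simp add: scalar_prod_def atLeast0LessThan)

lemma mult_mat_vec_zero: "M \<in> carrier_mat n m \<Longrightarrow> M *\<^sub>v 0\<^sub>v m = 0\<^sub>v n"
  by (intro eq_vecI) (auto simp: scalar_prod_def)

lemma left_inverse_eq_right_inverse:
  fixes A :: "'a::comm_ring_1 mat"
  assumes "A \<in> carrier_mat n n" "B \<in> carrier_mat n n" "C \<in> carrier_mat n n"
    and "B * A = 1\<^sub>m n" "A * C = 1\<^sub>m n"
  shows "B = C"
proof -
  have "B = B * (A * C)" using assms(2,5) by simp
  also have "\<dots> = (B * A) * C" by (rule assoc_mult_mat[symmetric, OF assms(2,1,3)])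
  also have "\<dots> = C" using assms(3,4) by simp
  finally show ?thesis .
qed

lemma invertible_mat_inverse_carrier:
  assumes "invertible_mat A" "A \<in> carrier_mat n n"
  obtains B where "B \<in> carrier_mat n n" "A * B = 1\<^sub>m n" "B * A = 1\<^sub>m n"
proof -
  obtain B where AB: "A * B = 1\<^sub>m (dim_row A)" and BA: "B * A = 1\<^sub>m (dim_row B)"
    using assms(1) unfolding invertible_mat_def inverts_mat_def by blast
  have "dim_col B = n" "dim_row B = n"
    using arg_cong[OF AB, of dim_col] arg_cong[OF BA, of dim_col] assms(2) by auto
  then show ?thesis
    using that AB BA assms(2) by auto
qed

lemma minv_inverse:
  fixes A :: "'a::field mat"
  assumes "A \<in> carrier_mat n n" "invertible_mat A"
  shows "minv A \<in> carrier_mat n n" "A * minv A = 1\<^sub>m n" "minv A * A = 1\<^sub>m n"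
proof -
  let ?P = "\<lambda>B. B \<in> carrier_mat (dim_row A) (dim_row A) \<and> inverts_mat A B \<and> inverts_mat B A"
  have P_iff: "?P B \<longleftrightarrow> B \<in> carrier_mat n n \<and> A * B = 1\<^sub>m n \<and> B * A = 1\<^sub>m n" for B
    using assms(1) unfolding inverts_mat_def by auto
  obtain B where B: "B \<in> carrier_mat n n" "A * B = 1\<^sub>m n" "B * A = 1\<^sub>m n"
    using invertible_mat_inverse_carrier[OF assms(2,1)] .
  have "\<exists>!B. ?P B"
    using B left_inverse_eq_right_inverse[OF assms(1) _ B(1) _ B(2)] unfolding P_iff by blast
  then have "?P (minv A)"
    unfolding minv_def by (rule theI')
  then show "minv A \<in> carrier_mat n n" "A * minv A = 1\<^sub>m n" "minv A * A = 1\<^sub>m n"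
    unfolding P_iff by auto
qed

lemma transpose_minv:
  fixes A :: "'a::field mat"
  assumes "A \<in> carrier_mat n n" "invertible_mat A" "transpose_mat A = A"
  shows "transpose_mat (minv A) = minv A"
proof -
  note inv = minv_inverse[OF assms(1,2)]
  have "transpose_mat (minv A) * A = transpose_mat (A * minv A)"
    using transpose_mult[OF assms(1) inv(1)] assms(3) by simp
  then have "transpose_mat (minv A) * A = 1\<^sub>m n"
    using inv(2) by simp
  then show ?thesis
    using left_inverse_eq_right_inverse[OF assms(1) _ inv(1) _ inv(2)] inv(1) by simp
qed

lemma invertible_mat_one: "invertible_mat (1\<^sub>m n :: 'a::semiring_1 mat)"
  unfolding invertible_mat_def inverts_mat_def by (intro conjI exI[of _ "1\<^sub>m n"]) auto

lemma minv_one: "minv (1\<^sub>m n :: 'a::field mat) = 1\<^sub>m n"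
proof -
  note inv = minv_inverse[OF one_carrier_mat invertible_mat_one, of n, where 'a = 'a]
  have "minv (1\<^sub>m n :: 'a mat) = 1\<^sub>m n * minv (1\<^sub>m n)"
    using inv(1) by simp
  then show ?thesis
    using inv(2) by simp
qed

lemma invertible_mat_iff_trivial_kernel:
  fixes M :: "'a::field mat"
  assumes M: "M \<in> carrier_mat n n"
  shows "invertible_mat M \<longleftrightarrow> (\<forall>v\<in>carrier_vec n. M *\<^sub>v v = 0\<^sub>v n \<longrightarrow> v = 0\<^sub>v n)"
proof
  assume "invertible_mat M"
  then obtain N where N: "N \<in> carrier_mat n n" "N * M = 1\<^sub>m n"
    using invertible_mat_inverse_carrier M by blast
  show "\<forall>v\<in>carrier_vec n. M *\<^sub>v v = 0\<^sub>v n \<longrightarrow> v = 0\<^sub>v n"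
  proof (intro ballI impI)
    fix v assume v: "v \<in> carrier_vec n" and "M *\<^sub>v v = 0\<^sub>v n"
    then have "(N * M) *\<^sub>v v = 0\<^sub>v n"
      using N(1) M by (simp add: mult_mat_vec_zero)
    then show "v = 0\<^sub>v n"
      using N(2) v by simp
  qed
next
  assume "\<forall>v\<in>carrier_vec n. M *\<^sub>v v = 0\<^sub>v n \<longrightarrow> v = 0\<^sub>v n"
  then have "det M \<noteq> 0"
    using det_0_iff_vec_prod_zero_field[OF M] by blast
  then obtain N where "N \<in> carrier_mat n n" "N * M = 1\<^sub>m n" "M * N = 1\<^sub>m n"
    using det_non_zero_imp_unit[OF M, of "()"] unfolding Units_def ring_mat_def by auto
  then show "invertible_mat M"
    using M unfolding invertible_mat_def inverts_mat_def by auto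
qed

lemma lin_indep_coords_mult_mat:
  fixes M :: "'a::field mat"
  assumes M: "M \<in> carrier_mat n n" and N: "N \<in> carrier_mat n n" "N * M = 1\<^sub>m n"
    and indep: "lin_indep_coords n I f"
  shows "lin_indep_coords n I (\<lambda>i k. \<Sum>l<n. M $$ (k, l) * f i l)"
proof (rule lin_indep_coordsI)
  fix c assume h: "\<forall>k<n. (\<Sum>i\<in>I. c i * (\<Sum>l<n. M $$ (k, l) * f i l)) = 0"
  define v where "v = vec n (\<lambda>l. \<Sum>i\<in>I. c i * f i l)"
  have v: "v \<in> carrier_vec n"
    by (simp add: v_def)
  have "M *\<^sub>v v = 0\<^sub>v n"
  proof (rule eq_vecI)
    fix k assume "k < dim_vec (0\<^sub>v n)"
    then have "k < n" by simp
    have "(M *\<^sub>v v) $ k = (\<Sum>l<n. M $$ (k, l) * (\<Sum>i\<in>I. c i * f i l))"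
      using mult_mat_vec_index_sum[OF M v \<open>k < n\<close>] by (simp add: v_def)
    also have "\<dots> = (\<Sum>i\<in>I. c i * (\<Sum>l<n. M $$ (k, l) * f i l))"
      by (simp add: sum_distrib_left mult_ac sum.swap[of _ "{..<n}"])
    finally show "(M *\<^sub>v v) $ k = 0\<^sub>v n $ k"
      using h \<open>k < n\<close> by simp
  qed (use M in simp)
  then have "(N * M) *\<^sub>v v = 0\<^sub>v n"
    using M N(1) v by (simp add: mult_mat_vec_zero)
  then have "v = 0\<^sub>v n"
    using N(2) v by simp
  then have "\<forall>l<n. v $ l = 0"
    by simp
  then have "\<forall>l<n. (\<Sum>i\<in>I. c i * f i l) = 0"
    by (simp add: v_def)
  then show "\<forall>i\<in>I. c i = 0"
    using lin_indep_coordsD[OF indep] by blast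
qed

lemma lin_indep_coords_inj_on:
  fixes x :: "nat \<Rightarrow> 'a::field vec"
  assumes indep: "lin_indep_coords n {..<r} (\<lambda>i k. x i $ k)"
  shows "inj_on x {..<r}"
proof (rule inj_onI, rule ccontr)
  fix i j assume ij: "i \<in> {..<r}" "j \<in> {..<r}" "x i = x j" "i \<noteq> j"
  define c :: "nat \<Rightarrow> 'a" where "c l = of_bool (l = i) - of_bool (l = j)" for l
  have "(\<Sum>l\<in>{..<r}. c l * x l $ k) = 0" for k
  proof -
    have "(\<Sum>l\<in>{..<r}. c l * x l $ k) = (\<Sum>l\<in>{i, j}. c l * x l $ k)"
      by (rule sum.mono_neutral_cong_right) (use ij in \<open>auto simp: c_def\<close>)
    then show ?thesis
      using ij by (simp add: c_def)
  qed
  then have "\<forall>k<n. (\<Sum>l\<in>{..<r}. c l * x l $ k) = 0"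
    by blast
  from lin_indep_coordsD[OF indep this ij(1)] show False
    using ij(4) by (simp add: c_def)
qed

context vec_space
begin

lemma lincomb_image_index:
  assumes "x ` S \<subseteq> carrier_vec n" "inj_on x S" "k < n"
  shows "lincomb a (x ` S) $ k = (\<Sum>i\<in>S. a (x i) * x i $ k)"
  using lincomb_index[OF assms(3,1)] by (simp add: sum.reindex[OF assms(2)])

lemma lin_indep_coords_if_lin_indpt:
  fixes r :: nat
  assumes carrier: "x ` {..<r} \<subseteq> carrier_vec n" and inj: "inj_on x {..<r}"
    and li: "lin_indpt (x ` {..<r})"
  shows "lin_indep_coords n {..<r} (\<lambda>i k. x i $ k)"
proof (rule lin_indep_coordsI, rule ccontr)
  fix c assume h: "\<forall>k<n. (\<Sum>i\<in>{..<r}. c i * x i $ k) = 0" and "\<not> (\<forall>i\<in>{..<r}. c i = 0)"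
  then obtain p where p: "p < r" "c p \<noteq> 0" by auto
  define a where "a = (\<lambda>v. c (the_inv_into {..<r} x v))"
  have a_x: "a (x i) = c i" if "i < r" for i
    using the_inv_into_f_f[OF inj] that by (simp add: a_def)
  have "lincomb a (x ` {..<r}) = 0\<^sub>v n"
  proof (rule eq_vecI)
    fix k assume "k < dim_vec (0\<^sub>v n)"
    then have "k < n" by simp
    then have "lincomb a (x ` {..<r}) $ k = (\<Sum>i<r. c i * x i $ k)"
      using lincomb_image_index[OF carrier inj] a_x by simp
    then show "lincomb a (x ` {..<r}) $ k = 0\<^sub>v n $ k"
      using h \<open>k < n\<close> by simp
  qed (use lincomb_closed[OF carrier] in simp)
  then have "lin_dep (x ` {..<r})"
    using p a_x carrier unfolding lin_dep_def by (intro exI[of _ "x ` {..<r}"] exI[of _ a]) auto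
  then show False
    using li by simp
qed

lemma lin_indpt_if_lin_indep_coords:
  fixes r :: nat
  assumes carrier: "x ` {..<r} \<subseteq> carrier_vec n" and inj: "inj_on x {..<r}"
    and indep: "lin_indep_coords n {..<r} (\<lambda>i k. x i $ k)"
  shows "lin_indpt (x ` {..<r})"
proof
  assume "lin_dep (x ` {..<r})"
  then obtain T a v where T: "T \<subseteq> x ` {..<r}" "lincomb a T = 0\<^sub>v n" "v \<in> T" "a v \<noteq> 0"
    unfolding lin_dep_def by blast
  define S where "S = {i\<in>{..<r}. x i \<in> T}"
  have T_eq: "T = x ` S" and S_sub: "S \<subseteq> {..<r}"
    using T(1) by (auto simp: S_def)
  have inj_S: "inj_on x S"
    using inj S_sub by (rule inj_on_subset)
  define c where "c = (\<lambda>i. if i \<in> S then a (x i) else 0)"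
  have "(\<Sum>i\<in>{..<r}. c i * x i $ k) = 0" if "k < n" for k
  proof -
    have "(\<Sum>i\<in>{..<r}. c i * x i $ k) = (\<Sum>i\<in>S. a (x i) * x i $ k)"
      by (rule sum.mono_neutral_cong_right) (auto simp: c_def S_def)
    also have "\<dots> = lincomb a (x ` S) $ k"
      using carrier S_sub inj_S that by (intro lincomb_image_index[symmetric]) auto
    also have "\<dots> = 0"
      using T(2) that by (simp add: T_eq[symmetric])
    finally show ?thesis .
  qed
  moreover obtain p where "p \<in> S" "v = x p"
    using T(3) T_eq by auto
  ultimately show False
    using lin_indep_coordsD[OF indep, of c p] T(4) S_sub by (auto simp: c_def)
qed

end

lemma lin_indep_family_iff_coords:
  "lin_indep_family n r x \<longleftrightarrow>
    (\<forall>i<r. x i \<in> carrier_vec n) \<and> lin_indep_coords n {..<r} (\<lambda>i k. x i $ k)"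
proof (cases "\<forall>i<r. x i \<in> carrier_vec n")
  case True
  then have "x ` {..<r} \<subseteq> carrier_vec n"
    by auto
  then show ?thesis
    using vec_space.lin_indep_coords_if_lin_indpt vec_space.lin_indpt_if_lin_indep_coords
      lin_indep_coords_inj_on True
    unfolding lin_indep_family_def by metis
qed (auto simp: lin_indep_family_def)

lemma sum_outer_mult_vec_index:
  assumes "\<forall>i<r. x i \<in> carrier_vec n" "w \<in> carrier_vec n" "k < n"
  shows "(sum_outer n r x *\<^sub>v w) $ k = (\<Sum>i<r. x i $ k * (x i \<bullet> w))"
proof -
  have S: "sum_outer n r x \<in> carrier_mat n n"
    by (simp add: sum_outer_def)
  have "(sum_outer n r x *\<^sub>v w) $ k = (\<Sum>l<n. sum_outer n r x $$ (k, l) * w $ l)"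
    by (rule mult_mat_vec_index_sum[OF S assms(2,3)])
  also have "\<dots> = (\<Sum>l<n. (\<Sum>i<r. x i $ k * x i $ l) * w $ l)"
    using assms(3) by (simp add: sum_outer_def)
  also have "\<dots> = (\<Sum>i<r. x i $ k * (\<Sum>l<n. x i $ l * w $ l))"
    by (simp add: sum_distrib_right sum_distrib_left mult.assoc sum.swap[of _ "{..<n}"])
  also have "\<dots> = (\<Sum>i<r. x i $ k * (x i \<bullet> w))"
    using scalar_prod_sum[OF assms(2)] by simp
  finally show ?thesis .
qed

lemma gram_carrier_mat [simp]: "gram r A x \<in> carrier_mat r r"
  by (simp add: gram_def)

section \<open>Symmetric matrices over F_2\<close>

(* The usual argument det K = det (- K^T) is void in characteristic 2, so lift K to a
   skew-symmetric integer matrix. *)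
lemma det_alternating_bit_mat_odd:
  fixes K :: "bit mat"
  assumes K: "K \<in> carrier_mat r r" and "odd r" and diag: "\<forall>i<r. K $$ (i, i) = 0"
    and sym: "\<forall>i<r. \<forall>j<r. K $$ (i, j) = K $$ (j, i)"
  shows "det K = 0"
proof -
  define L :: "int mat" where "L = mat r r (\<lambda>(i, j).
    if i < j then of_bool (K $$ (i, j) = 1) else if j < i then - of_bool (K $$ (j, i) = 1) else 0)"
  have L: "L \<in> carrier_mat r r" unfolding L_def by simp
  have "transpose_mat L = (-1) \<cdot>\<^sub>m L"
    by (rule eq_matI) (auto simp: L_def)
  then have "det L = (-1) ^ r * det L"
    using det_transpose[OF L] L by simp
  then have "det L = 0"
    using \<open>odd r\<close> by simp
  have "map_mat of_int L = K"
  proof (rule eq_matI)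
    fix i j assume "i < dim_row K" "j < dim_col K"
    then have "i < r" "j < r" using K by auto
    then show "map_mat of_int L $$ (i, j) = K $$ (i, j)"
      using diag sym by (cases "K $$ (i, j)") (auto simp: L_def)
  qed (use K L in auto)
  then have "det K = det (map_mat (of_int :: int \<Rightarrow> bit) L)"
    by simp
  also have "\<dots> = of_int (det L)"
    by (rule of_int_hom.hom_det)
  finally show ?thesis
    using \<open>det L = 0\<close> by simp
qed

lemma bit_vec_combination_eq_0:
  fixes v w :: "bit vec"
  assumes "v \<in> carrier_vec r" "w \<in> carrier_vec r" "\<forall>k<r. a * v $ k + b * w $ k = 0"
    and "a = 1 \<or> b = 1"
  shows "v = 0\<^sub>v r \<or> w = 0\<^sub>v r \<or> v = w"
proof -
  consider "a = 1" "b = 1" | "a = 1" "b = 0" | "a = 0" "b = 1"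
    using assms(4) by (cases a; cases b) auto
  then show ?thesis
  proof cases
    case 1
    then have "v = w"
      using assms(1-3) by (intro eq_vecI) (auto simp: bit_add_eq_0_iff)
    then show ?thesis by simp
  next
    case 2
    then have "v = 0\<^sub>v r"
      using assms(1,3) by (intro eq_vecI) auto
    then show ?thesis by simp
  next
    case 3
    then have "w = 0\<^sub>v r"
      using assms(2,3) by (intro eq_vecI) auto
    then show ?thesis by simp
  qed
qed

lemma lin_indpt_bit_vec_pair:
  fixes v w :: "bit vec"
  assumes carrier: "v \<in> carrier_vec r" "w \<in> carrier_vec r" and nonzero: "v \<noteq> 0\<^sub>v r" "w \<noteq> 0\<^sub>v r"
  shows "module.lin_indpt class_ring (module_vec TYPE(bit) r) {v, w}"
proof
  interpret vec_space "TYPE(bit)" r .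
  assume "lin_dep {v, w}"
  then obtain T a z where T: "T \<subseteq> {v, w}" "lincomb a T = 0\<^sub>v r" "z \<in> T" "a z \<noteq> 0"
    unfolding lin_dep_def by blast
  have T_carrier: "T \<subseteq> carrier_vec r"
    using T(1) carrier by auto
  define a' where "a' = (\<lambda>y. if y \<in> T then a y else 0)"
  have comb: "(\<Sum>y\<in>{v, w}. a' y * y $ k) = 0" if "k < r" for k
  proof -
    have "(\<Sum>y\<in>{v, w}. a' y * y $ k) = (\<Sum>y\<in>T. a y * y $ k)"
      unfolding a'_def using T(1) by (intro sum.mono_neutral_cong_right) auto
    also have "\<dots> = lincomb a T $ k"
      using lincomb_index[OF that T_carrier] by simp
    finally show ?thesis
      using T(2) that by simp
  qed
  have "a' v = 1 \<or> a' w = 1"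
    using T(1,3,4) by (auto simp: a'_def)
  show False
  proof (cases "v = w")
    case True
    then have "v = 0\<^sub>v r"
      using comb carrier \<open>a' v = 1 \<or> a' w = 1\<close> by (intro eq_vecI) auto
    then show False
      using nonzero by simp
  next
    case False
    then have "\<forall>k<r. a' v * v $ k + a' w * w $ k = 0"
      using comb by simp
    then show False
      using bit_vec_combination_eq_0[OF carrier] \<open>a' v = 1 \<or> a' w = 1\<close> nonzero False by blast
  qed
qed

lemma card_nonzero_cols_le_rank:
  fixes G :: "bit mat"
  assumes G: "G \<in> carrier_mat r r" and "i < r" "j < r"
    and "col G i \<noteq> 0\<^sub>v r" "col G j \<noteq> 0\<^sub>v r"
  shows "card {col G i, col G j} \<le> vec_space.rank r G"
proof -
  interpret vec_space "TYPE(bit)" r .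
  have "col G i \<in> set (cols G)" "col G j \<in> set (cols G)"
    using G assms(2,3) by (auto simp: cols_def)
  then show ?thesis
    using rank_ge_card_indpt[OF G _ lin_indpt_bit_vec_pair] G assms by auto
qed

lemma nonzero_cols_eq_if_rank_one:
  fixes G :: "bit mat"
  assumes G: "G \<in> carrier_mat r r" and rank: "vec_space.rank r G = 1"
    and "i < r" "j < r" "col G i \<noteq> 0\<^sub>v r" "col G j \<noteq> 0\<^sub>v r"
  shows "col G i = col G j"
  using card_nonzero_cols_le_rank[OF G assms(3-6)] rank by (cases "col G i = col G j") auto

lemma symmetric_bit_mat_rank_one_product:
  fixes G :: "bit mat"
  assumes G: "G \<in> carrier_mat r r" and sym: "\<forall>i<r. \<forall>j<r. G $$ (i, j) = G $$ (j, i)"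
    and rank: "vec_space.rank r G = 1" and "i < r" "j < r"
  shows "G $$ (i, j) = G $$ (i, i) * G $$ (j, j)"
proof (cases "col G i = 0\<^sub>v r \<or> col G j = 0\<^sub>v r")
  case True
  have zero_col: "G $$ (l, k) = 0" if "col G k = 0\<^sub>v r" "k < r" "l < r" for k l
    using arg_cong[OF that(1), of "\<lambda>v. v $ l"] G that(2,3) by simp
  show ?thesis
  proof (cases "col G j = 0\<^sub>v r")
    case True
    then show ?thesis
      using zero_col[of j i] zero_col[of j j] assms(4,5) by simp
  next
    case False
    then have "G $$ (j, i) = 0" "G $$ (i, i) = 0"
      using \<open>col G i = 0\<^sub>v r \<or> col G j = 0\<^sub>v r\<close> zero_col assms(4,5) by auto
    moreover have "G $$ (i, j) = G $$ (j, i)"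
      using sym assms(4,5) by blast
    ultimately show ?thesis
      by simp
  qed
next
  case False
  then have same: "col G i = col G j"
    using nonzero_cols_eq_if_rank_one[OF G rank assms(4,5)] by blast
  have "G $$ (i, j) = G $$ (i, i)" "G $$ (j, j) = G $$ (j, i)"
    using arg_cong[OF same, of "\<lambda>v. v $ i"] arg_cong[OF same, of "\<lambda>v. v $ j"] G assms(4,5)
    by simp_all
  then show ?thesis
    using sym assms(4,5) by simp
qed

lemma rank_one_if_product:
  fixes G :: "bit mat"
  assumes G: "G \<in> carrier_mat r r" and p: "p < r" "G $$ (p, p) = 1"
    and product: "\<forall>i<r. \<forall>j<r. G $$ (i, j) = G $$ (i, i) * G $$ (j, j)"
  shows "vec_space.rank r G = 1"
proof -
  have "G $$ (i, j) = G $$ (i, i) * G $$ (j, j)" if "i < dim_row G" "j < dim_col G" for i j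
  proof -
    have "i < r" "j < r"
      using that G by auto
    with product show ?thesis
      by blast
  qed
  then have "vec_space.rank r G \<le> 1"
    by (rule vec_space.rank_le_1_product_entries[OF G])
  moreover have "col G p \<noteq> 0\<^sub>v r"
  proof
    assume "col G p = 0\<^sub>v r"
    then have "col G p $ p = 0"
      using p by simp
    then show False
      using G p by simp
  qed
  then have "card {col G p, col G p} \<le> vec_space.rank r G"
    using card_nonzero_cols_le_rank[OF G p(1) p(1)] by blast
  ultimately show ?thesis
    by simp
qed

lemma rank_one_symmetric_bit_mat_iff:
  fixes G :: "bit mat"
  assumes G: "G \<in> carrier_mat r r" and sym: "\<forall>i<r. \<forall>j<r. G $$ (i, j) = G $$ (j, i)"
  shows "vec_space.rank r G = 1 \<longleftrightarrow>
    (\<exists>p<r. G $$ (p, p) = 1) \<and> (\<forall>i<r. \<forall>j<r. G $$ (i, j) = G $$ (i, i) * G $$ (j, j))"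
    (is "_ \<longleftrightarrow> ?rhs")
proof
  assume rank: "vec_space.rank r G = 1"
  then have product: "\<forall>i<r. \<forall>j<r. G $$ (i, j) = G $$ (i, i) * G $$ (j, j)"
    using symmetric_bit_mat_rank_one_product[OF G sym] by blast
  have "\<exists>p<r. G $$ (p, p) = 1"
  proof (rule ccontr)
    assume "\<not> (\<exists>p<r. G $$ (p, p) = 1)"
    then have "G $$ (i, j) = 0" if "i < r" "j < r" for i j
      using product[rule_format, OF that] that by simp
    then have "G = 0\<^sub>m r r"
      using G by (intro eq_matI) auto
    then show False
      using rank vec_space.rank_0I[of r r, where 'a = bit] by simp
  qed
  with product show ?rhs
    by blast
qed (use rank_one_if_product[OF G] in blast)

lemma outer_product_bit_mat_rank_trace:
  fixes G :: "bit mat"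
  assumes G: "G \<in> carrier_mat r r" and p: "p < r" "u p = 1"
    and outer: "\<forall>i<r. \<forall>j<r. G $$ (i, j) = u i * u j"
  shows "vec_space.rank r G = 1" "mtrace G = (\<Sum>i<r. u i)"
proof -
  have "G $$ (p, p) = 1" "\<forall>i<r. \<forall>j<r. G $$ (i, j) = G $$ (i, i) * G $$ (j, j)"
    using outer p by simp_all
  then show "vec_space.rank r G = 1"
    using rank_one_if_product[OF G p(1)] by blast
  show "mtrace G = (\<Sum>i<r. u i)"
    using G outer by (simp add: mtrace_def)
qed

lemma sum_of_bool_less_even_bit:
  fixes k r :: nat
  assumes "2 * k \<le> r"
  shows "(\<Sum>i<r. of_bool (i < 2 * k) :: bit) = 0"
proof -
  have "(\<Sum>i<r. of_bool (i < 2 * k) :: bit) = of_nat (card ({..<r} \<inter> {i. i < 2 * k}))"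
    by simp
  also have "{..<r} \<inter> {i. i < 2 * k} = {..<2 * k}"
    using assms by auto
  finally show ?thesis
    by (simp add: of_nat_bit)
qed

section \<open>Symmetric updates of invertible symmetric matrices\<close>

locale symmetric_update =
  fixes n r :: nat and A B :: "bit mat" and x :: "nat \<Rightarrow> bit vec"
  assumes setting: "setting n r A B x"
begin

lemma
  shows A_carrier: "A \<in> carrier_mat n n" and A_invertible: "invertible_mat A"
    and A_symmetric: "transpose_mat A = A"
    and B_carrier: "B \<in> carrier_mat n n" and B_invertible: "invertible_mat B"
    and B_minus_A: "B - A = sum_outer n r x"
  using setting unfolding setting_def SGL_def by auto

lemma x_carrier: "\<forall>i<r. x i \<in> carrier_vec n"
  and x_indep: "lin_indep_coords n {..<r} (\<lambda>i k. x i $ k)"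
  using setting lin_indep_family_iff_coords unfolding setting_def by auto

lemma B_eq: "B = A + sum_outer n r x"
proof (rule eq_matI)
  fix k l assume "k < dim_row (A + sum_outer n r x)" "l < dim_col (A + sum_outer n r x)"
  then have "k < n" "l < n" using A_carrier by (auto simp: sum_outer_def)
  then have "B $$ (k, l) + A $$ (k, l) = sum_outer n r x $$ (k, l)"
    using arg_cong[OF B_minus_A, of "\<lambda>M. M $$ (k, l)"] A_carrier B_carrier by simp
  then have "B $$ (k, l) = A $$ (k, l) + sum_outer n r x $$ (k, l)"
    by (cases "B $$ (k, l)"; cases "A $$ (k, l)"; cases "sum_outer n r x $$ (k, l)") auto
  then show "B $$ (k, l) = (A + sum_outer n r x) $$ (k, l)"
    using \<open>k < n\<close> \<open>l < n\<close> A_carrier by (simp add: sum_outer_def)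
qed (use A_carrier B_carrier in \<open>auto simp: sum_outer_def\<close>)

lemma minv_A: "minv A \<in> carrier_mat n n" "A * minv A = 1\<^sub>m n"
  using minv_inverse[OF A_carrier A_invertible] by auto

lemma gram_eq_sum:
  assumes "i < r" "j < r"
  shows "gram r A x $$ (i, j) = (\<Sum>k<n. x i $ k * (\<Sum>l<n. minv A $$ (k, l) * x j $ l))"
  using assms minv_A x_carrier
  by (simp add: gram_def scalar_prod_sum[of _ n] mult_mat_vec_index_sum[of _ n n])

lemma gram_symmetric:
  assumes "i < r" "j < r"
  shows "gram r A x $$ (i, j) = gram r A x $$ (j, i)"
proof -
  have sym: "minv A $$ (k, l) = minv A $$ (l, k)" if "k < n" "l < n" for k l
    using arg_cong[OF transpose_minv[OF A_carrier A_invertible A_symmetric], of "\<lambda>M. M $$ (l, k)"]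
      minv_A(1) that by simp
  have "gram r A x $$ (i, j) = (\<Sum>k<n. \<Sum>l<n. x i $ k * (minv A $$ (k, l) * x j $ l))"
    using gram_eq_sum[OF assms] by (simp add: sum_distrib_left)
  also have "\<dots> = (\<Sum>l<n. \<Sum>k<n. x j $ l * (minv A $$ (l, k) * x i $ k))"
    using sym by (subst sum.swap) (simp add: mult_ac)
  also have "\<dots> = gram r A x $$ (j, i)"
    using gram_eq_sum[OF assms(2,1)] by (simp add: sum_distrib_left)
  finally show ?thesis .
qed

lemma gram_mult_sum:
  assumes "i < r"
  shows "x i \<bullet> (minv A *\<^sub>v vec n (\<lambda>k. \<Sum>j<r. c j * x j $ k)) = (\<Sum>j<r. gram r A x $$ (i, j) * c j)"
proof -
  have "x i \<bullet> (minv A *\<^sub>v vec n (\<lambda>k. \<Sum>j<r. c j * x j $ k))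
      = (\<Sum>k<n. x i $ k * (\<Sum>l<n. minv A $$ (k, l) * (\<Sum>j<r. c j * x j $ l)))"
    using minv_A(1) by (simp add: scalar_prod_sum[of _ n] mult_mat_vec_index_sum[of _ n n])
  also have "\<dots> = (\<Sum>k<n. \<Sum>l<n. \<Sum>j<r. c j * (x i $ k * (minv A $$ (k, l) * x j $ l)))"
    by (simp add: sum_distrib_left mult_ac)
  also have "\<dots> = (\<Sum>k<n. \<Sum>j<r. \<Sum>l<n. c j * (x i $ k * (minv A $$ (k, l) * x j $ l)))"
    by (rule sum.cong[OF refl], rule sum.swap)
  also have "\<dots> = (\<Sum>j<r. \<Sum>k<n. \<Sum>l<n. c j * (x i $ k * (minv A $$ (k, l) * x j $ l)))"
    by (rule sum.swap)
  also have "\<dots> = (\<Sum>j<r. c j * (\<Sum>k<n. x i $ k * (\<Sum>l<n. minv A $$ (k, l) * x j $ l)))"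
    by (simp add: sum_distrib_left)
  also have "\<dots> = (\<Sum>j<r. gram r A x $$ (i, j) * c j)"
    using gram_eq_sum[OF assms] by (simp add: mult.commute)
  finally show ?thesis .
qed

lemma one_plus_gram_injective:
  assumes c: "\<forall>i<r. c i + (\<Sum>j<r. gram r A x $$ (i, j) * c j) = 0"
  shows "\<forall>i<r. c i = 0"
proof -
  define v where "v = vec n (\<lambda>k. \<Sum>j<r. c j * x j $ k)"
  define w where "w = minv A *\<^sub>v v"
  have v: "v \<in> carrier_vec n" and w: "w \<in> carrier_vec n"
    using minv_A(1) by (auto simp: v_def w_def)
  have Aw: "A *\<^sub>v w = v"
    using minv_A A_carrier v by (simp add: w_def assoc_mult_mat_vec[symmetric])
  have "B *\<^sub>v w = 0\<^sub>v n"
  proof (rule eq_vecI)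
    fix k assume "k < dim_vec (0\<^sub>v n)"
    then have "k < n" by simp
    have "(B *\<^sub>v w) $ k = v $ k + (sum_outer n r x *\<^sub>v w) $ k"
      using B_eq A_carrier w Aw \<open>k < n\<close>
      by (simp add: add_mult_distrib_mat_vec sum_outer_def)
    also have "\<dots> = (\<Sum>i<r. x i $ k * (c i + (\<Sum>j<r. gram r A x $$ (i, j) * c j)))"
      using sum_outer_mult_vec_index[OF x_carrier w \<open>k < n\<close>] gram_mult_sum \<open>k < n\<close>
      by (simp add: v_def w_def distrib_left sum.distrib mult.commute)
    also have "\<dots> = 0"
      using c by simp
    finally show "(B *\<^sub>v w) $ k = 0\<^sub>v n $ k"
      using \<open>k < n\<close> by simp
  qed (use B_carrier in simp)
  then have "w = 0\<^sub>v n"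
    using B_invertible B_carrier w invertible_mat_iff_trivial_kernel by blast
  then have "v = 0\<^sub>v n"
    using Aw mult_mat_vec_zero[OF A_carrier] by simp
  then have "\<forall>k<n. v $ k = 0"
    by simp
  then have "\<forall>k<n. (\<Sum>j\<in>{..<r}. c j * x j $ k) = 0"
    by (simp add: v_def)
  from lin_indep_coordsD[OF x_indep this] show ?thesis
    by simp
qed

lemma card_le_dim: "r \<le> n"
proof -
  have "card {..<r} + card ({} :: nat set) \<le> n"
    by (rule orthogonal_lin_indep_coords_card_le[OF _ _ x_indep, where g = "\<lambda>_ _. 0"])
      (auto simp: lin_indep_coords_def)
  then show ?thesis by simp
qed

lemma rank_one_gram_bound:
  assumes p: "p < r" "u p = 1" and G: "\<forall>i<r. \<forall>j<r. gram r A x $$ (i, j) = u i * u j"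
  shows "2 * r \<le> n + 1"
proof -
  define f where "f = (\<lambda>i k. \<Sum>l<n. minv A $$ (k, l) * x i $ l)"
  define g where "g = (\<lambda>i k. x i $ k + u i * x p $ k)"
  have f_indep: "lin_indep_coords n {..<r} f"
    unfolding f_def by (rule lin_indep_coords_mult_mat[OF minv_A(1) A_carrier minv_A(2) x_indep])
  have g_indep: "lin_indep_coords n ({..<r} - {p}) g"
    unfolding g_def by (rule lin_indep_coords_shear[OF x_indep]) (use p in auto)
  have "(\<Sum>k<n. f i k * g j k) = 0" if "i < r" "j < r" for i j
  proof -
    have "(\<Sum>k<n. f i k * g j k) = (\<Sum>k<n. x j $ k * f i k) + u j * (\<Sum>k<n. x p $ k * f i k)"
      by (simp add: g_def distrib_left sum.distrib sum_distrib_left mult_ac)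
    also have "\<dots> = u j * u i + u j * (u p * u i)"
      using gram_eq_sum[OF that(2,1)] gram_eq_sum[OF p(1) that(1)] G that p(1)
      by (simp add: f_def)
    finally show ?thesis
      using p(2) by simp
  qed
  then have "card {..<r} + card ({..<r} - {p}) \<le> n"
    by (intro orthogonal_lin_indep_coords_card_le[OF _ _ f_indep g_indep]) auto
  then show ?thesis
    using p(1) by simp
qed

lemma unit_diagonal_even:
  assumes diag: "\<forall>i<r. gram r A x $$ (i, i) = 1"
  shows "even r"
proof (rule ccontr)
  assume "odd r"
  define K where "K = 1\<^sub>m r + gram r A x"
  have K: "K \<in> carrier_mat r r"
    by (simp add: K_def gram_def)
  have "det K = 0"
    by (rule det_alternating_bit_mat_odd[OF K \<open>odd r\<close>])
      (use diag gram_symmetric in \<open>auto simp: K_def gram_def\<close>)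
  then obtain v where v: "v \<in> carrier_vec r" "v \<noteq> 0\<^sub>v r" "K *\<^sub>v v = 0\<^sub>v r"
    using det_0_iff_vec_prod_zero_field[OF K] by blast
  have "v $ i + (\<Sum>j<r. gram r A x $$ (i, j) * v $ j) = 0" if "i < r" for i
  proof -
    have "(K *\<^sub>v v) $ i = v $ i + (gram r A x *\<^sub>v v) $ i"
      using v(1) that by (simp add: K_def gram_def add_mult_distrib_mat_vec[of _ r r])
    then show ?thesis
      using v(3) that mult_mat_vec_index_sum[of "gram r A x" r r v i] v(1)
      by (simp add: gram_def)
  qed
  then have "\<forall>i<r. v $ i = 0"
    using one_plus_gram_injective by blast
  then have "v = 0\<^sub>v r"
    using v(1) by (intro eq_vecI) auto
  with v(2) show False ..
qed

lemma gram_neq_one: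
  assumes "0 < r"
  shows "gram r A x \<noteq> 1\<^sub>m r"
proof
  define c :: "nat \<Rightarrow> bit" where "c = (\<lambda>j. of_bool (j = 0))"
  assume G: "gram r A x = 1\<^sub>m r"
  have "c i + (\<Sum>j<r. gram r A x $$ (i, j) * c j) = 0" if "i < r" for i
  proof -
    have "(\<Sum>j<r. gram r A x $$ (i, j) * c j) = (\<Sum>j<r. if j = i then c j else 0)"
      using that G by (intro sum.cong refl) simp
    also have "\<dots> = c i"
      using that by simp
    finally show ?thesis
      by simp
  qed
  then have "c 0 = 0"
    using one_plus_gram_injective assms by blast
  then show False
    by (simp add: c_def)
qed

lemma rank_gram_eq_one_iff:
  "vec_space.rank r (gram r A x) = 1 \<longleftrightarrow> (\<exists>p<r. gram r A x $$ (p, p) = 1) \<and>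
    (\<forall>i<r. \<forall>j<r. gram r A x $$ (i, j) = gram r A x $$ (i, i) * gram r A x $$ (j, j))"
  by (rule rank_one_symmetric_bit_mat_iff[OF gram_carrier_mat]) (use gram_symmetric in blast)

end

section \<open>Gram matrices of indicator vectors\<close>

definition indicator_vec :: "nat \<Rightarrow> nat set \<Rightarrow> 'a::zero_neq_one vec" where
  "indicator_vec n S = vec n (\<lambda>k. of_bool (k \<in> S))"

lemma indicator_vec_carrier [simp]: "indicator_vec n S \<in> carrier_vec n"
  by (simp add: indicator_vec_def)

lemma index_indicator_vec [simp]: "k < n \<Longrightarrow> indicator_vec n S $ k = of_bool (k \<in> S)"
  by (simp add: indicator_vec_def)

lemma indicator_vec_scalar_prod:
  assumes "S \<subseteq> {..<n}" "T \<subseteq> {..<n}"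
  shows "indicator_vec n S \<bullet> (indicator_vec n T :: 'a::semiring_1 vec) = of_nat (card (S \<inter> T))"
proof -
  have "indicator_vec n S \<bullet> (indicator_vec n T :: 'a vec)
      = (\<Sum>k<n. indicator_vec n S $ k * indicator_vec n T $ k)"
    by (rule scalar_prod_sum) simp
  also have "\<dots> = (\<Sum>k<n. of_bool (k \<in> S \<and> k \<in> T))"
    by (intro sum.cong) auto
  also have "\<dots> = (\<Sum>k\<in>S \<inter> T. 1)"
    by (rule sum.mono_neutral_cong_right) (use assms in auto)
  finally show ?thesis
    by simp
qed

definition incidence_sum :: "nat \<Rightarrow> (nat \<Rightarrow> nat set) \<Rightarrow> (nat \<Rightarrow> 'a) \<Rightarrow> nat \<Rightarrow> 'a::comm_monoid_add" where
  "incidence_sum r S c k = (\<Sum>j | j < r \<and> k \<in> S j. c j)"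

lemma sum_card_inter_eq_incidence_sum:
  fixes c :: "nat \<Rightarrow> 'a::comm_semiring_1"
  assumes "finite T"
  shows "(\<Sum>j<r. of_nat (card (T \<inter> S j)) * c j) = (\<Sum>k\<in>T. incidence_sum r S c k)"
proof -
  have "of_nat (card (T \<inter> S j)) = (\<Sum>k\<in>T. of_bool (k \<in> S j) :: 'a)" for j
    using assms by (simp add: Int_def)
  then have "(\<Sum>j<r. of_nat (card (T \<inter> S j)) * c j) = (\<Sum>j<r. \<Sum>k\<in>T. of_bool (k \<in> S j) * c j)"
    by (simp add: sum_distrib_right)
  also have "\<dots> = (\<Sum>k\<in>T. \<Sum>j<r. of_bool (k \<in> S j) * c j)"
    by (rule sum.swap)
  also have "\<dots> = (\<Sum>k\<in>T. incidence_sum r S c k)"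
  proof (rule sum.cong[OF refl])
    fix k
    have "(\<Sum>j<r. of_bool (k \<in> S j) * c j) = (\<Sum>j<r. if k \<in> S j then c j else 0)"
      by (intro sum.cong) auto
    also have "\<dots> = (\<Sum>j\<in>{j \<in> {..<r}. k \<in> S j}. c j)"
      by (rule sum.inter_filter[symmetric]) simp
    also have "{j \<in> {..<r}. k \<in> S j} = {j. j < r \<and> k \<in> S j}"
      by auto
    finally show "(\<Sum>j<r. of_bool (k \<in> S j) * c j) = incidence_sum r S c k"
      by (simp add: incidence_sum_def)
  qed
  finally show ?thesis .
qed

lemma invertible_one_plus_sum_outer:
  fixes x :: "nat \<Rightarrow> bit vec"
  assumes x_carrier: "\<forall>i<r. x i \<in> carrier_vec n"
    and kernel: "\<And>c. \<forall>i<r. c i + (\<Sum>j<r. (x i \<bullet> x j) * c j) = 0 \<Longrightarrow> \<forall>i<r. c i = 0"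
  shows "invertible_mat (1\<^sub>m n + sum_outer n r x)"
proof -
  have S: "sum_outer n r x \<in> carrier_mat n n"
    by (simp add: sum_outer_def)
  show ?thesis
    unfolding invertible_mat_iff_trivial_kernel[OF add_carrier_mat[OF S, of "1\<^sub>m n"]]
  proof (intro ballI impI)
    fix w assume w: "w \<in> carrier_vec n" and "(1\<^sub>m n + sum_outer n r x) *\<^sub>v w = 0\<^sub>v n"
    define c where "c i = x i \<bullet> w" for i
    have w_eq: "w $ k = (\<Sum>j<r. c j * x j $ k)" if "k < n" for k
    proof -
      have "w + sum_outer n r x *\<^sub>v w = 0\<^sub>v n"
        using \<open>(1\<^sub>m n + sum_outer n r x) *\<^sub>v w = 0\<^sub>v n\<close> add_mult_distrib_mat_vec[OF one_carrier_mat S w] w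
        by simp
      then have "0 = (w + sum_outer n r x *\<^sub>v w) $ k"
        using that by simp
      also have "\<dots> = w $ k + (sum_outer n r x *\<^sub>v w) $ k"
        by (rule index_add_vec(1)) (use S that in simp)
      also have "\<dots> = w $ k + (\<Sum>j<r. c j * x j $ k)"
        using sum_outer_mult_vec_index[OF x_carrier w that] by (simp add: c_def mult.commute)
      finally show ?thesis
        by (simp add: bit_add_eq_0_iff)
    qed
    have "c i + (\<Sum>j<r. (x i \<bullet> x j) * c j) = 0" if "i < r" for i
    proof -
      have "c i = (\<Sum>k<n. x i $ k * w $ k)"
        unfolding c_def by (rule scalar_prod_sum[OF w])
      also have "\<dots> = (\<Sum>k<n. x i $ k * (\<Sum>j<r. c j * x j $ k))"
        using w_eq by (intro sum.cong) auto
      also have "\<dots> = (\<Sum>j<r. (\<Sum>k<n. x i $ k * x j $ k) * c j)"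
        by (simp add: sum_distrib_left sum_distrib_right mult_ac sum.swap[of _ "{..<r}"])
      also have "\<dots> = (\<Sum>j<r. (x i \<bullet> x j) * c j)"
        using x_carrier by (intro sum.cong refl) (simp add: scalar_prod_sum[of _ n])
      finally show ?thesis
        by simp
    qed
    then have "\<forall>i<r. c i = 0"
      using kernel by blast
    then show "w = 0\<^sub>v n"
      using w w_eq by (intro eq_vecI) auto
  qed
qed

lemma setting_one_mat:
  assumes x_carrier: "\<forall>i<r. x i \<in> carrier_vec n"
    and indep: "lin_indep_coords n {..<r} (\<lambda>i k. x i $ k)"
    and kernel: "\<And>c. \<forall>i<r. c i + (\<Sum>j<r. (x i \<bullet> x j) * c j) = 0 \<Longrightarrow> \<forall>i<r. c i = 0"
  shows "setting n r (1\<^sub>m n) (1\<^sub>m n + sum_outer n r x) x"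
    and "gram r (1\<^sub>m n) x = mat r r (\<lambda>(i, j). x i \<bullet> x j)"
proof -
  have S: "sum_outer n r x \<in> carrier_mat n n"
    by (simp add: sum_outer_def)
  have "transpose_mat (1\<^sub>m n + sum_outer n r x) = 1\<^sub>m n + sum_outer n r x"
    by (rule eq_matI) (auto simp: sum_outer_def mult.commute)
  moreover have "1\<^sub>m n + sum_outer n r x - 1\<^sub>m n = sum_outer n r x"
    using S by (intro eq_matI) auto
  ultimately show "setting n r (1\<^sub>m n) (1\<^sub>m n + sum_outer n r x) x"
    using S invertible_mat_one invertible_one_plus_sum_outer[OF x_carrier kernel]
      lin_indep_family_iff_coords x_carrier indep
    unfolding setting_def SGL_def by auto
  show "gram r (1\<^sub>m n) x = mat r r (\<lambda>(i, j). x i \<bullet> x j)"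
    using x_carrier by (intro eq_matI) (auto simp: gram_def minv_one)
qed

lemma exists_setting_indicator_vecs:
  fixes S :: "nat \<Rightarrow> nat set" and p h :: "nat \<Rightarrow> nat"
  assumes sub: "\<forall>i<r. S i \<subseteq> {..<n}"
    and pivot: "\<forall>i<r. p i \<in> S i"
    and order: "\<forall>i<r. \<forall>j<r. j \<noteq> i \<longrightarrow> p i \<in> S j \<longrightarrow> h j < h i"
    and kernel: "\<And>c. \<forall>i<r. c i + (\<Sum>j<r. of_nat (card (S i \<inter> S j)) * c j) = (0::bit)
      \<Longrightarrow> \<forall>i<r. c i = 0"
  shows "\<exists>A B x. setting n r A B x \<and>
    (\<forall>i<r. \<forall>j<r. gram r A x $$ (i, j) = of_nat (card (S i \<inter> S j)))"
proof -
  define x :: "nat \<Rightarrow> bit vec" where "x i = indicator_vec n (S i)" for i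
  have x_carrier: "\<forall>i<r. x i \<in> carrier_vec n"
    by (simp add: x_def)
  have dot: "x i \<bullet> x j = of_nat (card (S i \<inter> S j))" if "i < r" "j < r" for i j
    using sub that by (simp add: x_def indicator_vec_scalar_prod)
  have pivot_lt: "p i < n" if "i < r" for i
    using pivot sub that by blast
  have indep: "lin_indep_coords n {..<r} (\<lambda>i k. x i $ k)"
  proof (rule lin_indep_coords_echelon[where p = p and h = h])
    fix i assume "i \<in> {..<r}"
    then show "p i < n \<and> x i $ p i \<noteq> 0"
      using pivot pivot_lt by (simp add: x_def)
  next
    fix i j assume "i \<in> {..<r}" "j \<in> {..<r}" "j \<noteq> i" "x j $ p i \<noteq> 0"
    then show "h j < h i"
      using order pivot_lt by (simp add: x_def)
  qed simp
  have "\<forall>i<r. c i = 0" if c: "\<forall>i<r. c i + (\<Sum>j<r. (x i \<bullet> x j) * c j) = 0" for c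
  proof (rule kernel, intro allI impI)
    fix i assume "i < r"
    have "(\<Sum>j<r. (x i \<bullet> x j) * c j) = (\<Sum>j<r. of_nat (card (S i \<inter> S j)) * c j)"
      using dot \<open>i < r\<close> by (intro sum.cong) simp_all
    then show "c i + (\<Sum>j<r. of_nat (card (S i \<inter> S j)) * c j) = 0"
      using c \<open>i < r\<close> by metis
  qed
  then have "setting n r (1\<^sub>m n) (1\<^sub>m n + sum_outer n r x) x"
    and gram: "gram r (1\<^sub>m n) x = mat r r (\<lambda>(i, j). x i \<bullet> x j)"
    using setting_one_mat[OF x_carrier indep] by blast+
  moreover have "\<forall>i<r. \<forall>j<r. gram r (1\<^sub>m n) x $$ (i, j) = of_nat (card (S i \<inter> S j))"
    using gram dot by simp
  ultimately show ?thesis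
    by blast
qed

lemma outer_product_kernel:
  fixes u c :: "nat \<Rightarrow> 'a::comm_ring_1"
  assumes isotropic: "(\<Sum>j<r. u j * u j) = 0"
    and c: "\<forall>i<r. c i + u i * (\<Sum>j<r. u j * c j) = 0"
  shows "\<forall>i<r. c i = 0"
proof -
  define t where "t = (\<Sum>j<r. u j * c j)"
  have c_eq: "c i = - (u i * t)" if "i < r" for i
    using c that by (simp add: t_def eq_neg_iff_add_eq_0)
  have "t = (\<Sum>j<r. u j * c j)"
    by (simp add: t_def)
  also have "\<dots> = (\<Sum>j<r. u j * - (u j * t))"
    using c_eq by (intro sum.cong) auto
  also have "\<dots> = - ((\<Sum>j<r. u j * u j) * t)"
    by (simp add: sum_distrib_right sum_negf mult.assoc)
  finally have "t = 0"
    using isotropic by simp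
  then show ?thesis
    using c_eq by simp
qed

(* Coordinate 0 is shared by the sets with u i = 1, while the private pairs {2 i - 1, 2 i} separate
   the vectors without changing the parities of the intersections. *)
definition rank_one_sets :: "(nat \<Rightarrow> bit) \<Rightarrow> nat \<Rightarrow> nat set" where
  "rank_one_sets u i = (if u i = 1 then {0} else {}) \<union> (if i = 0 then {} else {2 * i - 1, 2 * i})"

lemma card_rank_one_sets_inter:
  "(of_nat (card (rank_one_sets u i \<inter> rank_one_sets u j)) :: bit) = u i * u j"
proof (cases "i = j")
  case True
  then show ?thesis
    by (cases "u i") (auto simp: rank_one_sets_def of_nat_bit)
next
  case False
  then have "rank_one_sets u i \<inter> rank_one_sets u j = (if u i = 1 \<and> u j = 1 then {0} else {})"
    by (auto simp: rank_one_sets_def)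
  then show ?thesis
    by (cases "u i"; cases "u j") auto
qed

lemma exists_setting_rank_one_gram:
  assumes "2 * r \<le> n + 1" "u 0 = 1" "(\<Sum>i<r. u i) = 0"
  shows "\<exists>A B x. setting n r A B x \<and> (\<forall>i<r. \<forall>j<r. gram r A x $$ (i, j) = u i * u j)"
proof -
  let ?S = "rank_one_sets u"
  have "\<exists>A B x. setting n r A B x \<and>
      (\<forall>i<r. \<forall>j<r. gram r A x $$ (i, j) = of_nat (card (?S i \<inter> ?S j)))"
  proof (rule exists_setting_indicator_vecs[where p = "\<lambda>i. if i = 0 then 0 else 2 * i - 1"
        and h = "\<lambda>i. of_bool (i = 0)"])
    show "\<forall>i<r. ?S i \<subseteq> {..<n}"
      using assms(1) by (auto simp: rank_one_sets_def)
    show "\<forall>i<r. (if i = 0 then 0 else 2 * i - 1) \<in> ?S i"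
      using assms(2) by (auto simp: rank_one_sets_def)
    show "\<forall>i<r. \<forall>j<r. j \<noteq> i \<longrightarrow> (if i = 0 then 0 else 2 * i - 1) \<in> ?S j \<longrightarrow>
        of_bool (j = 0) < (of_bool (i = 0) :: nat)"
      by (auto simp: rank_one_sets_def split: if_splits)
  next
    fix c :: "nat \<Rightarrow> bit"
    assume "\<forall>i<r. c i + (\<Sum>j<r. of_nat (card (?S i \<inter> ?S j)) * c j) = 0"
    then have "\<forall>i<r. c i + u i * (\<Sum>j<r. u j * c j) = 0"
      by (simp add: card_rank_one_sets_inter sum_distrib_left mult.assoc)
    moreover have "(\<Sum>j<r. u j * u j) = 0"
      using assms(3) by simp
    ultimately show "\<forall>i<r. c i = 0"
      using outer_product_kernel by blast
  qed
  then show ?thesis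
    by (simp add: card_rank_one_sets_inter)
qed

definition unit_diagonal_sets :: "nat \<Rightarrow> nat \<Rightarrow> nat set" where
  "unit_diagonal_sets m i =
    (if i = 0 then {0, m, m + 1} else if i < m then {0, i, m + i} else {i})"

lemma finite_unit_diagonal_sets [simp]: "finite (unit_diagonal_sets m i)"
  by (simp add: unit_diagonal_sets_def)

lemma incidence_sum_unit_diagonal_sets:
  assumes "2 \<le> m" "t < m"
  shows "incidence_sum (2 * m) (unit_diagonal_sets m) c t = (if t = 0 then (\<Sum>j<m. c j) else c t)"
    and "incidence_sum (2 * m) (unit_diagonal_sets m) c (m + t)
      = c t + c (m + t) + (if t = 1 then c 0 else 0)"
proof -
  have "{j. j < 2 * m \<and> t \<in> unit_diagonal_sets m j} = (if t = 0 then {..<m} else {t})"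
    using assms by (auto simp: unit_diagonal_sets_def)
  then show "incidence_sum (2 * m) (unit_diagonal_sets m) c t = (if t = 0 then (\<Sum>j<m. c j) else c t)"
    by (simp add: incidence_sum_def)
  have "{j. j < 2 * m \<and> m + t \<in> unit_diagonal_sets m j} =
      (if t = 1 then {0, 1, m + 1} else {t, m + t})"
    using assms by (auto simp: unit_diagonal_sets_def)
  then show "incidence_sum (2 * m) (unit_diagonal_sets m) c (m + t)
      = c t + c (m + t) + (if t = 1 then c 0 else 0)"
    using assms by (auto simp: incidence_sum_def ac_simps)
qed

lemma unit_diagonal_sets_kernel:
  fixes c :: "nat \<Rightarrow> bit"
  assumes m: "2 \<le> m"
    and gram: "\<forall>i<2 * m. c i +
      (\<Sum>j<2 * m. of_nat (card (unit_diagonal_sets m i \<inter> unit_diagonal_sets m j)) * c j) = 0"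
  shows "\<forall>i<2 * m. c i = 0"
proof -
  let ?S = "unit_diagonal_sets m" and ?W = "incidence_sum (2 * m) (unit_diagonal_sets m) c"
  have c: "\<forall>i<2 * m. c i + (\<Sum>k\<in>?S i. ?W k) = 0"
    using gram by (simp only: sum_card_inter_eq_incidence_sum[OF finite_unit_diagonal_sets])
  note W_low = incidence_sum_unit_diagonal_sets(1)[OF m, of _ c]
    and W_high = incidence_sum_unit_diagonal_sets(2)[OF m, of _ c]
  have c_single: "c (m + t) + ?W (m + t) = 0" if "t < m" for t
    using c[rule_format, of "m + t"] that by (simp add: unit_diagonal_sets_def)
  have low: "c t = 0" if "t < m" for t
  proof -
    have "c 0 = 0"
      using c_single[of 0] W_high[of 0] m by simp
    then show ?thesis
      using c_single[OF that] W_high[OF that] by (simp add: split: if_splits)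
  qed
  then have W_low_0: "?W k = 0" if "k < m" for k
    using W_low[OF that] that by simp
  have high: "c (m + t) = 0" if "1 \<le> t" "t < m" for t
  proof -
    have "?S t = {0, t, m + t}"
      using that by (simp add: unit_diagonal_sets_def)
    then have "c t + (?W 0 + (?W t + ?W (m + t))) = 0"
      using c[rule_format, of t] that by simp
    then show ?thesis
      using W_low_0[of 0] W_low_0[of t] W_high[of t] low[of 0] low[of t] that
      by (simp split: if_splits)
  qed
  have "c m = 0"
  proof -
    have "c 0 + (?W 0 + (?W m + ?W (m + 1))) = 0"
      using c[rule_format, of 0] m by (simp add: unit_diagonal_sets_def)
    then show ?thesis
      using W_low_0[of 0] W_high[of 0] W_high[of 1] high[of 1] low m by simp
  qed
  show ?thesis
  proof (intro allI impI)
    fix i assume "i < 2 * m"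
    then have "i < m \<or> i = m \<or> 1 \<le> i - m \<and> i - m < m"
      by linarith
    then show "c i = 0"
      using low high[of "i - m"] \<open>c m = 0\<close> by auto
  qed
qed

lemma exists_setting_unit_diagonal_gram:
  assumes m: "2 \<le> m" and "2 * m \<le> n"
  shows "\<exists>A B x. setting n (2 * m) A B x \<and> (\<forall>i<2 * m. gram (2 * m) A x $$ (i, i) = 1)
    \<and> gram (2 * m) A x $$ (m, m + 1) = 0"
proof -
  let ?S = "unit_diagonal_sets m" and ?h = "\<lambda>i. if i < m then of_bool (i = 0) else 2 :: nat"
  have "\<exists>A B x. setting n (2 * m) A B x \<and>
      (\<forall>i<2 * m. \<forall>j<2 * m. gram (2 * m) A x $$ (i, j) = of_nat (card (?S i \<inter> ?S j)))"
  proof (rule exists_setting_indicator_vecs[where p = id and h = ?h])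
    show "\<forall>i<2 * m. ?S i \<subseteq> {..<n}"
      using assms by (auto simp: unit_diagonal_sets_def)
    show "\<forall>i<2 * m. id i \<in> ?S i"
      by (simp add: unit_diagonal_sets_def)
    show "\<forall>i<2 * m. \<forall>j<2 * m. j \<noteq> i \<longrightarrow> id i \<in> ?S j \<longrightarrow> ?h j < ?h i"
    proof (intro allI impI)
      fix i j assume "i < 2 * m" "j < 2 * m" "j \<noteq> i" "id i \<in> ?S j"
      then have "j = 0 \<and> (i = m \<or> i = m + 1) \<or> 0 < j \<and> j < m \<and> (i = 0 \<or> i = m + j)"
        by (simp add: unit_diagonal_sets_def split: if_splits)
      then show "?h j < ?h i"
        using m by auto
    qed
  next
    fix c :: "nat \<Rightarrow> bit"
    assume "\<forall>i<2 * m. c i + (\<Sum>j<2 * m. of_nat (card (?S i \<inter> ?S j)) * c j) = 0"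
    then show "\<forall>i<2 * m. c i = 0"
      by (rule unit_diagonal_sets_kernel[OF m])
  qed
  then obtain A B x where "setting n (2 * m) A B x"
    and gram: "\<forall>i<2 * m. \<forall>j<2 * m. gram (2 * m) A x $$ (i, j) = of_nat (card (?S i \<inter> ?S j))"
    by blast
  moreover have "gram (2 * m) A x $$ (i, i) = 1" if "i < 2 * m" for i
  proof -
    have "card (?S i) = (if i < m then 3 else 1)"
      using m by (simp add: unit_diagonal_sets_def)
    then show ?thesis
      using gram that by (simp add: of_nat_bit)
  qed
  moreover have "gram (2 * m) A x $$ (m, m + 1) = 0"
    using gram m by (simp add: unit_diagonal_sets_def)
  ultimately show ?thesis
    by blast
qed

definition paired_sets :: "nat \<Rightarrow> nat \<Rightarrow> nat set" where
  "paired_sets s i = (if i < s div 2 then {i, s div 2 + i}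
    else if i = s div 2 \<and> odd s then {i, s - 1} else {i})"

lemma finite_paired_sets [simp]: "finite (paired_sets s i)"
  by (simp add: paired_sets_def)

lemma incidence_sum_paired_sets:
  assumes "2 \<le> s" "k < s"
  shows "incidence_sum s (paired_sets s) c k = (if k < s div 2 then c k else c (k - s div 2) + c k)"
proof -
  have "{j. j < s \<and> k \<in> paired_sets s j} = (if k < s div 2 then {k} else {k - s div 2, k})"
    using assms by (cases "even s") (auto simp: paired_sets_def elim!: evenE oddE)
  then show ?thesis
    using assms by (auto simp: incidence_sum_def)
qed

lemma paired_sets_kernel:
  fixes c :: "nat \<Rightarrow> bit"
  assumes s: "2 \<le> s"
    and gram: "\<forall>i<s. c i + (\<Sum>j<s. of_nat (card (paired_sets s i \<inter> paired_sets s j)) * c j) = 0"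
  shows "\<forall>i<s. c i = 0"
proof -
  define m where "m = s div 2"
  have m: "1 \<le> m" "m < s" "s = 2 * m \<or> s = 2 * m + 1"
    using s by (auto simp: m_def)
  let ?W = "incidence_sum s (paired_sets s) c"
  have c: "\<forall>i<s. c i + (\<Sum>k\<in>paired_sets s i. ?W k) = 0"
    using gram by (simp only: sum_card_inter_eq_incidence_sum[OF finite_paired_sets])
  have W: "?W k = (if k < m then c k else c (k - m) + c k)" if "k < s" for k
    using incidence_sum_paired_sets[OF s that, of c] by (simp add: m_def)
  have single: "c (i - m) = 0" if "m \<le> i" "i < s" "\<not> (i = m \<and> odd s)" for i
  proof -
    have "paired_sets s i = {i}"
      using that by (auto simp: paired_sets_def m_def)
    then show ?thesis
      using c[rule_format, of i] W[of i] that by simp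
  qed
  have pair: "c (m + t) = c t" if "t < m" for t
  proof -
    have "c t + (?W t + ?W (m + t)) = 0"
      using c[rule_format, of t] that m by (simp add: paired_sets_def m_def)
    then show ?thesis
      using W[of t] W[of "m + t"] that m by (auto simp: bit_add_eq_0_iff)
  qed
  have odd_m: "c m = 0" if "odd s"
    using single[of "2 * m"] m that by auto
  have low: "c t = 0" if "t < m" for t
  proof (cases "t = 0 \<and> odd s")
    case True
    then show ?thesis
      using pair[of 0] odd_m m by simp
  next
    case False
    then show ?thesis
      using single[of "m + t"] that m by auto
  qed
  have odd_top: "c (2 * m) = 0" if "odd s"
  proof -
    have "paired_sets s m = {m, 2 * m}"
      using that m by (auto simp: paired_sets_def m_def elim!: oddE)
    then have "c m + (?W m + ?W (2 * m)) = 0"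
      using c[rule_format, of m] m by simp
    then show ?thesis
      using W[of m] W[of "2 * m"] low[of 0] odd_m that m by auto
  qed
  show ?thesis
  proof (intro allI impI)
    fix i assume "i < s"
    then have "i < m \<or> m \<le> i \<and> i - m < m \<or> odd s \<and> i = 2 * m"
      using m(3) by (auto elim: oddE)
    then show "c i = 0"
      using low pair[of "i - m"] odd_top by auto
  qed
qed

lemma exists_setting_paired_gram:
  assumes s: "2 \<le> s" and "s \<le> n"
  shows "\<exists>A B x. setting n s A B x \<and> gram s A x $$ (0, 0) = 0 \<and> gram s A x $$ (0, s div 2) = 1"
proof -
  define m where "m = s div 2"
  have m: "1 \<le> m" "m < s" "s \<le> 2 * m + 1"
    using s by (auto simp: m_def)
  let ?S = "paired_sets s" and ?h = "\<lambda>i. if i < m then 0 else if i < 2 * m then 1 else 2 :: nat"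
  have "\<exists>A B x. setting n s A B x \<and>
      (\<forall>i<s. \<forall>j<s. gram s A x $$ (i, j) = of_nat (card (?S i \<inter> ?S j)))"
  proof (rule exists_setting_indicator_vecs[where p = id and h = ?h])
    show "\<forall>i<s. ?S i \<subseteq> {..<n}"
      using assms by (auto simp: paired_sets_def)
    show "\<forall>i<s. id i \<in> ?S i"
      by (simp add: paired_sets_def)
    show "\<forall>i<s. \<forall>j<s. j \<noteq> i \<longrightarrow> id i \<in> ?S j \<longrightarrow> ?h j < ?h i"
    proof (intro allI impI)
      fix i j assume "i < s" "j < s" "j \<noteq> i" "id i \<in> ?S j"
      then have "j < m \<and> i = m + j \<or> j = m \<and> i = 2 * m"
        by (auto simp: paired_sets_def m_def split: if_splits)
      then show "?h j < ?h i"
        using m by auto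
    qed
  next
    fix c :: "nat \<Rightarrow> bit"
    assume "\<forall>i<s. c i + (\<Sum>j<s. of_nat (card (?S i \<inter> ?S j)) * c j) = 0"
    then show "\<forall>i<s. c i = 0"
      by (rule paired_sets_kernel[OF s])
  qed
  then obtain A B x where "setting n s A B x"
    and gram: "\<forall>i<s. \<forall>j<s. gram s A x $$ (i, j) = of_nat (card (?S i \<inter> ?S j))"
    by blast
  moreover have "gram s A x $$ (0, 0) = 0"
  proof -
    have "?S 0 \<inter> ?S 0 = {0, m}"
      using m by (auto simp: paired_sets_def m_def)
    then show ?thesis
      using gram m by (simp add: of_nat_bit)
  qed
  moreover have "gram s A x $$ (0, m) = 1"
  proof -
    have "?S 0 \<inter> ?S m = {m}"
      using m by (auto simp: paired_sets_def m_def)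
    then show ?thesis
      using gram m by simp
  qed
  ultimately show ?thesis
    unfolding m_def by blast
qed

section \<open>The four characterisations\<close>

lemma all_ones_gram_iff:
  assumes "1 \<le> r"
  shows "(\<exists>A B x. setting n r A B x \<and> (\<forall>i<r. \<forall>j<r. gram r A x $$ (i, j) = 1))
    \<longleftrightarrow> even r \<and> 2 * r \<le> n + 1"
proof
  assume "\<exists>A B x. setting n r A B x \<and> (\<forall>i<r. \<forall>j<r. gram r A x $$ (i, j) = 1)"
  then obtain A B x where st: "setting n r A B x" and ones: "\<forall>i<r. \<forall>j<r. gram r A x $$ (i, j) = 1"
    by blast
  interpret symmetric_update n r A B x
    by (rule symmetric_update.intro[OF st])
  have "even r"
    using unit_diagonal_even ones by blast
  moreover have "2 * r \<le> n + 1"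
    using rank_one_gram_bound[of 0 "\<lambda>_. 1"] ones assms by simp
  ultimately show "even r \<and> 2 * r \<le> n + 1" ..
next
  assume "even r \<and> 2 * r \<le> n + 1"
  then show "\<exists>A B x. setting n r A B x \<and> (\<forall>i<r. \<forall>j<r. gram r A x $$ (i, j) = 1)"
    using exists_setting_rank_one_gram[of r n "\<lambda>_. 1"] by (simp add: of_nat_bit)
qed

lemma unit_diagonal_gram_with_zero_iff:
  assumes "1 \<le> r"
  shows "(\<exists>A B x. setting n r A B x \<and> (\<forall>i<r. gram r A x $$ (i, i) = 1)
      \<and> (\<exists>i<r. \<exists>j<r. gram r A x $$ (i, j) = 0))
    \<longleftrightarrow> even r \<and> 4 \<le> r \<and> r \<le> n"
proof
  assume "\<exists>A B x. setting n r A B x \<and> (\<forall>i<r. gram r A x $$ (i, i) = 1)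
      \<and> (\<exists>i<r. \<exists>j<r. gram r A x $$ (i, j) = 0)"
  then obtain A B x i j where st: "setting n r A B x" and diag: "\<forall>i<r. gram r A x $$ (i, i) = 1"
    and zero: "i < r" "j < r" "gram r A x $$ (i, j) = 0"
    by blast
  interpret symmetric_update n r A B x
    by (rule symmetric_update.intro[OF st])
  have "r \<noteq> 2"
  proof
    assume "r = 2"
    have "i \<noteq> j"
      using diag zero by auto
    then have "i = 0 \<and> j = 1 \<or> i = 1 \<and> j = 0"
      using zero(1,2) \<open>r = 2\<close> by auto
    then have "gram r A x $$ (0, 1) = 0" "gram r A x $$ (1, 0) = 0"
      using zero(3) gram_symmetric[of 0 1] \<open>r = 2\<close> by auto
    then have "gram r A x = 1\<^sub>m r"
      using diag \<open>r = 2\<close> by (intro eq_matI) (auto simp: gram_def less_2_cases_iff)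
    then show False
      using gram_neq_one assms by simp
  qed
  then show "even r \<and> 4 \<le> r \<and> r \<le> n"
    using unit_diagonal_even[OF diag] card_le_dim assms by presburger
next
  assume "even r \<and> 4 \<le> r \<and> r \<le> n"
  then obtain m where m: "r = 2 * m" "2 \<le> m" "2 * m \<le> n"
    by (auto elim!: evenE)
  then obtain A B x where "setting n r A B x" "\<forall>i<r. gram r A x $$ (i, i) = 1"
    "gram r A x $$ (m, m + 1) = 0"
    using exists_setting_unit_diagonal_gram by blast
  moreover have "m < r" "m + 1 < r"
    using m by auto
  ultimately show "\<exists>A B x. setting n r A B x \<and> (\<forall>i<r. gram r A x $$ (i, i) = 1)
      \<and> (\<exists>i<r. \<exists>j<r. gram r A x $$ (i, j) = 0)"
    by blast
qed

lemma rank_one_traceless_gram_iff: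
  assumes "1 \<le> r"
  shows "(\<exists>A B x. setting n r A B x \<and> vec_space.rank r (gram r A x) = 1 \<and> mtrace (gram r A x) = 0)
    \<longleftrightarrow> 2 \<le> r \<and> 2 * r \<le> n + 1"
proof
  assume "\<exists>A B x. setting n r A B x \<and> vec_space.rank r (gram r A x) = 1 \<and> mtrace (gram r A x) = 0"
  then obtain A B x where st: "setting n r A B x" and rank: "vec_space.rank r (gram r A x) = 1"
    and trace: "mtrace (gram r A x) = 0"
    by blast
  interpret symmetric_update n r A B x
    by (rule symmetric_update.intro[OF st])
  obtain p where p: "p < r" "gram r A x $$ (p, p) = 1"
    and product: "\<forall>i<r. \<forall>j<r. gram r A x $$ (i, j) = gram r A x $$ (i, i) * gram r A x $$ (j, j)"
    using rank rank_gram_eq_one_iff by blast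
  have "2 * r \<le> n + 1"
    by (rule rank_one_gram_bound[OF p product])
  moreover have "r \<noteq> 1"
  proof
    assume "r = 1"
    then have "mtrace (gram r A x) = gram r A x $$ (p, p)"
      using p by (simp add: mtrace_def gram_def)
    then show False
      using trace p by simp
  qed
  ultimately show "2 \<le> r \<and> 2 * r \<le> n + 1"
    using assms by simp
next
  assume r: "2 \<le> r \<and> 2 * r \<le> n + 1"
  define u :: "nat \<Rightarrow> bit" where "u i = of_bool (i < 2 * (r div 2))" for i
  have "u 0 = 1"
    using r by (simp add: u_def)
  have "(\<Sum>i<r. u i) = 0"
    unfolding u_def by (rule sum_of_bool_less_even_bit) simp
  obtain A B x where "setting n r A B x"
    and outer: "\<forall>i<r. \<forall>j<r. gram r A x $$ (i, j) = u i * u j"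
    using exists_setting_rank_one_gram[of r n u] r \<open>u 0 = 1\<close> \<open>(\<Sum>i<r. u i) = 0\<close> by blast
  then show "\<exists>A B x. setting n r A B x \<and> vec_space.rank r (gram r A x) = 1
      \<and> mtrace (gram r A x) = 0"
    using outer_product_bit_mat_rank_trace[OF gram_carrier_mat _ _ outer, of 0] r
      \<open>u 0 = 1\<close> \<open>(\<Sum>i<r. u i) = 0\<close> by auto
qed

lemma exists_gram_with_zero_diagonal_entry:
  assumes "2 \<le> n" "s \<in> {1..n}"
  shows "\<exists>A B x. setting n s A B x \<and> gram s A x $$ (0, 0) = 0
    \<and> (s = 1 \<or> gram s A x $$ (0, s div 2) = 1)"
proof (cases "s = 1")
  case True
  have "\<exists>A B x. setting n 1 A B x \<and>
      (\<forall>i<1. \<forall>j<1. gram 1 A x $$ (i, j) = of_nat (card ({0, 1} \<inter> {0, 1 :: nat})))"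
    by (rule exists_setting_indicator_vecs[where r = 1 and S = "\<lambda>_. {0, 1}" and p = "\<lambda>_. 0"
          and h = "\<lambda>_. 0"])
      (use assms(1) in auto)
  then show ?thesis
    using True by simp
next
  case False
  then show ?thesis
    using exists_setting_paired_gram[of s n] assms by auto
qed

lemma exists_gram_neither:
  assumes "2 \<le> n" "s \<in> {1..n}"
  shows "\<exists>A B x. setting n s A B x \<and> \<not> (\<forall>i<s. gram s A x $$ (i, i) = 1)
    \<and> \<not> (vec_space.rank s (gram s A x) = 1 \<and> mtrace (gram s A x) = 0)"
proof -
  obtain A B x where st: "setting n s A B x" and zero: "gram s A x $$ (0, 0) = 0"
    and one: "s = 1 \<or> gram s A x $$ (0, s div 2) = 1"
    using exists_gram_with_zero_diagonal_entry[OF assms] by blast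
  interpret symmetric_update n s A B x
    by (rule symmetric_update.intro[OF st])
  have "vec_space.rank s (gram s A x) \<noteq> 1"
  proof
    assume "vec_space.rank s (gram s A x) = 1"
    then obtain p where p: "p < s" "gram s A x $$ (p, p) = 1"
      and product: "\<forall>i<s. \<forall>j<s. gram s A x $$ (i, j) = gram s A x $$ (i, i) * gram s A x $$ (j, j)"
      using rank_gram_eq_one_iff by blast
    show False
    proof (cases "s = 1")
      case True
      then show False
        using p zero by simp
    next
      case False
      have "0 < s" "s div 2 < s"
        using assms(2) by auto
      then have "gram s A x $$ (0, s div 2) = gram s A x $$ (0, 0) * gram s A x $$ (s div 2, s div 2)"
        using product by blast
      then have "gram s A x $$ (0, s div 2) = 0"
        using zero by simp
      then show False
        using one False by simp
    qed
  qed
  moreover have "\<not> (\<forall>i<s. gram s A x $$ (i, i) = 1)"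
  proof
    assume "\<forall>i<s. gram s A x $$ (i, i) = 1"
    then have "gram s A x $$ (0, 0) = 1"
      using assms(2) by simp
    then show False
      using zero by simp
  qed
  ultimately show ?thesis
    using st by blast
qed

theorem lemma7p1:
  fixes n r :: nat
  assumes "n \<ge> 2" and "r \<ge> 1"
  shows
    "((\<exists>A B x. setting n r A B x \<and> (\<forall>i<r. \<forall>j<r. gram r A x $$ (i, j) = 1))
        \<longleftrightarrow> even r \<and> r \<le> (n + 1) div 2)
   \<and> ((\<exists>A B x. setting n r A B x \<and> (\<forall>i<r. gram r A x $$ (i, i) = 1)
          \<and> (\<exists>i<r. \<exists>j<r. gram r A x $$ (i, j) = 0))
        \<longleftrightarrow> r \<in> {1..n} - {2} \<and> even r)
   \<and> ((\<exists>A B x. setting n r A B x \<and> vec_space.rank r (gram r A x) = 1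
          \<and> mtrace (gram r A x) = 0)
        \<longleftrightarrow> r \<in> {2..(n + 1) div 2})
   \<and> (\<forall>s\<in>{1..n}. \<exists>A B x. setting n s A B x
          \<and> \<not> (\<forall>i<s. gram s A x $$ (i, i) = 1)
          \<and> \<not> (vec_space.rank s (gram s A x) = 1 \<and> mtrace (gram s A x) = 0))"
proof -
  have half: "r \<le> (n + 1) div 2 \<longleftrightarrow> 2 * r \<le> n + 1"
    by linarith
  have not_two: "r \<in> {1..n} - {2} \<and> even r \<longleftrightarrow> even r \<and> 4 \<le> r \<and> r \<le> n"
    using assms(2) by auto
  have two_to_half: "r \<in> {2..(n + 1) div 2} \<longleftrightarrow> 2 \<le> r \<and> 2 * r \<le> n + 1"
    by auto
  show ?thesis
    unfolding half not_two two_to_half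
    by (intro conjI ballI all_ones_gram_iff unit_diagonal_gram_with_zero_iff
        rank_one_traceless_gram_iff exists_gram_neither assms)
qed

end
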